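(* Let $\Sigma\subseteq\mathcal L_\Diamond$ be finite and closed under subformulas and let $\mathcal I$ be a finite weak $\Sigma$-quasimodel such that for every deterministic weak $\mathcal L_\Diamond$-quasimodel $\mathcal A$ the relation $\rightharpoonup\ \subseteq|\mathcal I|\times|\mathcal A|$ is a surjective dynamic simulation. Let $P=\{w\in|\mathcal I|:\ \not\vdash\mathrm{Sim}(w)\}$ be the set of possible moments. Then $P$ is upward closed in $(|\mathcal I|,\preccurlyeq_{\mathcal I})$, and $S_{\mathcal I}\cap(P\times P)$ is serial on $P$: for every $w\in P$ there is $v\in P$ with $w\,S_{\mathcal I}\,v$.
   Context: $\mathcal L_\Diamond$ is the propositional language with $\bot,\wedge,\vee,\to$ and unary modalities $\bigcirc$, $\Diamond$. ${\sf ITL}^0_\Diamond$ is axiomatized by all intuitionistic propositional tautologies, $\neg\bigcirc\bot$, $\bigcirc\varphi\wedge\bigcirc\psi\to\bigcirc(\varphi\wedge\psi)$, $\bigcirc(\varphi\vee\psi)\to\bigcirc\varphi\vee\bigcirc\psi$, $\bigcirc(\varphi\to\psi)\to(\bigcirc\varphi\to\bigcirc\psi)$, $\varphi\vee\bigcirc\Diamond\varphi\to\Diamond\varphi$, closed under modus ponens and the rules $\varphi/\bigcirc\varphi$, $(\varphi\to\psi)/(\Diamond\varphi\to\Diamond\psi)$, $(\bigcirc\varphi\to\varphi)/(\Diamond\varphi\to\varphi)$; $\vdash\varphi$ means $\varphi\in{\sf ITL}^0_\Diamond$. Types: a $\Sigma$-type is a pair $\Phi=(\Phi^-;\Phi^+)$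 of subsets of $\Sigma$ with $\Phi^-\cap\Phi^+=\varnothing$, $\Phi^-\cup\Phi^+=\Sigma$, $\bot\notin\Phi^+$, $\wedge,\vee$ in $\Phi^+$ behaving classically, ($\varphi\to\psi\in\Phi^+\Rightarrow\varphi\in\Phi^-$ or $\psi\in\Phi^+$), ($\Diamond\varphi\in\Phi^-\Rightarrow\varphi\in\Phi^-$). $\Phi\preccurlyeq_T\Psi$ iff $\Phi^+\subseteq\Psi^+$; $\Phi\subseteq_T\Psi$ iff $\Phi^-\subseteq\Psi^-$, $\Phi^+\subseteq\Psi^+$. $\Phi\,S_T\,\Psi$ iff: $\bigcirc\varphi\in\Phi^+\Rightarrow\varphi\in\Psi^+$; $\bigcirc\varphi\in\Phi^-\Rightarrow\varphi\in\Psi^-$; ($\Diamond\varphi\in\Phi^+$, $\varphi\in\Phi^-$)$\Rightarrow\Diamond\varphi\in\Psi^+$; $\Diamond\varphi\in\Phi^-\Rightarrow\Diamond\varphi\in\Psi^-$. A $\Sigma$-labelled frame is $(W,\preccurlyeq,\ell)$, $\preccurlyeq$ a partial order, $\ell$ mapping to $\Sigma$-types, monotone w.r.t. $\preccurlyeq_T$, and if $\varphi\to\psi\in\ell^-(w)$ then some $v\succcurlyeq w$ has $\varphi\in\ell^+(v)$, $\psi\in\ell^-(v)$. A weak $\Sigma$-quasimodel adds $S\subseteq W\times W$ forward-confluent (if $w\preccurlyeq w'$, $w\,S\,v$ then some $v'\succcurlyeq v$ has $w'\,S\,v'$) and sensible ($w\,S\,v\Rightarrow\ell(w)\,S_T\,\ell(v)$);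 deterministic if $S$ is a function. A simulation from a $\Sigma$-labelled $\mathcal X$ to a $\Delta$-labelled $\mathcal Y$ ($\Sigma\subseteq\Delta$) is a forward-confluent $E\subseteq|\mathcal X|\times|\mathcal Y|$ (if $x\,E\,y$, $x\preccurlyeq x'$ then some $y'\succcurlyeq y$ has $x'\,E\,y'$) with $x\,E\,y\Rightarrow\ell(x)\subseteq_T\ell(y)$; $x\rightharpoonup y$ iff some simulation relates them; $E$ is dynamic if $x\,E\,y$ and $y\,S\,y'$ imply some $x'$ with $x\,S\,x'$, $x'\,E\,y'$; surjective if every point of $\mathcal A$ is in its range. $\mathrm{Sim}(w)$ for $w$ in a finite $\Sigma$-labelled frame is defined by backwards induction on $\prec$: $\mathrm{Sim}(w)=\bigwedge\ell^+(w)\to\big(\bigvee\ell^-(w)\vee\bigvee_{v\succ w}\mathrm{Sim}(v)\big)$ ($\bigwedge\varnothing=\top$, $\bigvee\varnothing=\bot$). *)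

theory Defs
  imports Main
begin

datatype fm = Var nat | Bot | And fm fm | Or fm fm | Imp fm fm | Nxt fm | Dia fm

definition Top :: fm where "Top = Imp Bot Bot"

fun subfms :: "fm \<Rightarrow> fm set" where
  "subfms (Var p) = {Var p}"
| "subfms Bot = {Bot}"
| "subfms (And a b) = insert (And a b) (subfms a \<union> subfms b)"
| "subfms (Or a b) = insert (Or a b) (subfms a \<union> subfms b)"
| "subfms (Imp a b) = insert (Imp a b) (subfms a \<union> subfms b)"
| "subfms (Nxt a) = insert (Nxt a) (subfms a)"
| "subfms (Dia a) = insert (Dia a) (subfms a)"

definition subfm_closed :: "fm set \<Rightarrow> bool" where
  "subfm_closed \<Sigma> \<longleftrightarrow> (\<forall>\<phi>\<in>\<Sigma>. subfms \<phi> \<subseteq> \<Sigma>)"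

text \<open>Intuitionistic propositional tautologies are obtained as the closure under
modus ponens of all instances (over the whole language) of the standard Hilbert
axiom schemes of intuitionistic propositional logic.\<close>

inductive prv :: "fm \<Rightarrow> bool" where
  ipc1: "prv (Imp a (Imp b a))"
| ipc2: "prv (Imp (Imp a (Imp b c)) (Imp (Imp a b) (Imp a c)))"
| ipc3: "prv (Imp (And a b) a)"
| ipc4: "prv (Imp (And a b) b)"
| ipc5: "prv (Imp a (Imp b (And a b)))"
| ipc6: "prv (Imp a (Or a b))"
| ipc7: "prv (Imp b (Or a b))"
| ipc8: "prv (Imp (Imp a c) (Imp (Imp b c) (Imp (Or a b) c)))"
| ipc9: "prv (Imp Bot a)"
| nxt_bot: "prv (Imp (Nxt Bot) Bot)"
| nxt_and: "prv (Imp (And (Nxt a) (Nxt b)) (Nxt (And a b)))"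
| nxt_or: "prv (Imp (Nxt (Or a b)) (Or (Nxt a) (Nxt b)))"
| nxt_imp: "prv (Imp (Nxt (Imp a b)) (Imp (Nxt a) (Nxt b)))"
| dia_fix: "prv (Imp (Or a (Nxt (Dia a))) (Dia a))"
| mp: "prv (Imp a b) \<Longrightarrow> prv a \<Longrightarrow> prv b"
| nec: "prv a \<Longrightarrow> prv (Nxt a)"
| dia_mono: "prv (Imp a b) \<Longrightarrow> prv (Imp (Dia a) (Dia b))"
| dia_ind: "prv (Imp (Nxt a) a) \<Longrightarrow> prv (Imp (Dia a) a)"

text \<open>A type is a pair (Phi-minus, Phi-plus).\<close>
type_synonym tp = "fm set \<times> fm set"

definition is_type :: "fm set \<Rightarrow> tp \<Rightarrow> bool" where
  "is_type \<Sigma> \<Phi> \<longleftrightarrow>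
     fst \<Phi> \<inter> snd \<Phi> = {} \<and> fst \<Phi> \<union> snd \<Phi> = \<Sigma> \<and> Bot \<notin> snd \<Phi> \<and>
     (\<forall>a b. And a b \<in> \<Sigma> \<longrightarrow> (And a b \<in> snd \<Phi> \<longleftrightarrow> a \<in> snd \<Phi> \<and> b \<in> snd \<Phi>)) \<and>
     (\<forall>a b. Or a b \<in> \<Sigma> \<longrightarrow> (Or a b \<in> snd \<Phi> \<longleftrightarrow> a \<in> snd \<Phi> \<or> b \<in> snd \<Phi>)) \<and>
     (\<forall>a b. Imp a b \<in> snd \<Phi> \<longrightarrow> a \<in> fst \<Phi> \<or> b \<in> snd \<Phi>) \<and>
     (\<forall>a. Dia a \<in> fst \<Phi> \<longrightarrow> a \<in> fst \<Phi>)"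

definition type_le :: "tp \<Rightarrow> tp \<Rightarrow> bool" where
  "type_le \<Phi> \<Psi> \<longleftrightarrow> snd \<Phi> \<subseteq> snd \<Psi>"

definition type_sub :: "tp \<Rightarrow> tp \<Rightarrow> bool" where
  "type_sub \<Phi> \<Psi> \<longleftrightarrow> fst \<Phi> \<subseteq> fst \<Psi> \<and> snd \<Phi> \<subseteq> snd \<Psi>"

definition type_S :: "tp \<Rightarrow> tp \<Rightarrow> bool" where
  "type_S \<Phi> \<Psi> \<longleftrightarrow>
     (\<forall>a. Nxt a \<in> snd \<Phi> \<longrightarrow> a \<in> snd \<Psi>) \<and>
     (\<forall>a. Nxt a \<in> fst \<Phi> \<longrightarrow> a \<in> fst \<Psi>) \<and>
     (\<forall>a. Dia a \<in> snd \<Phi> \<and> a \<in> fst \<Phi> \<longrightarrow> Dia a \<in> snd \<Psi>) \<and>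
     (\<forall>a. Dia a \<in> fst \<Phi> \<longrightarrow> Dia a \<in> fst \<Psi>)"

record 'a kframe =
  carrier :: "'a set"
  le :: "'a \<Rightarrow> 'a \<Rightarrow> bool"
  lab :: "'a \<Rightarrow> tp"
  suc :: "'a \<Rightarrow> 'a \<Rightarrow> bool"

definition labelled_frame :: "fm set \<Rightarrow> 'a kframe \<Rightarrow> bool" where
  "labelled_frame \<Sigma> M \<longleftrightarrow>
     (\<forall>w\<in>carrier M. le M w w) \<and>
     (\<forall>u\<in>carrier M. \<forall>v\<in>carrier M. \<forall>w\<in>carrier M. le M u v \<and> le M v w \<longrightarrow> le M u w) \<and>
     (\<forall>u\<in>carrier M. \<forall>v\<in>carrier M. le M u v \<and> le M v u \<longrightarrow> u = v) \<and>
     (\<forall>u v. le M u v \<longrightarrow> u \<in> carrier M \<and> v \<in> carrier M) \<and>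
     (\<forall>w\<in>carrier M. is_type \<Sigma> (lab M w)) \<and>
     (\<forall>w\<in>carrier M. \<forall>v\<in>carrier M. le M w v \<longrightarrow> type_le (lab M w) (lab M v)) \<and>
     (\<forall>w\<in>carrier M. \<forall>a b. Imp a b \<in> fst (lab M w) \<longrightarrow>
        (\<exists>v\<in>carrier M. le M w v \<and> a \<in> snd (lab M v) \<and> b \<in> fst (lab M v)))"

definition weak_quasimodel :: "fm set \<Rightarrow> 'a kframe \<Rightarrow> bool" where
  "weak_quasimodel \<Sigma> M \<longleftrightarrow>
     labelled_frame \<Sigma> M \<and>
     (\<forall>w v. suc M w v \<longrightarrow> w \<in> carrier M \<and> v \<in> carrier M) \<and>
     (\<forall>w w' v. le M w w' \<and> suc M w v \<longrightarrow> (\<exists>v'. le M v v' \<and> suc M w' v')) \<and>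
     (\<forall>w v. suc M w v \<longrightarrow> type_S (lab M w) (lab M v))"

definition deterministic :: "'a kframe \<Rightarrow> bool" where
  "deterministic M \<longleftrightarrow> (\<forall>w\<in>carrier M. \<exists>!v. suc M w v)"

definition simulation :: "'a kframe \<Rightarrow> 'b kframe \<Rightarrow> ('a \<Rightarrow> 'b \<Rightarrow> bool) \<Rightarrow> bool" where
  "simulation X Y E \<longleftrightarrow>
     (\<forall>x y. E x y \<longrightarrow> x \<in> carrier X \<and> y \<in> carrier Y) \<and>
     (\<forall>x y x'. E x y \<and> le X x x' \<longrightarrow> (\<exists>y'. le Y y y' \<and> E x' y')) \<and>
     (\<forall>x y. E x y \<longrightarrow> type_sub (lab X x) (lab Y y))"

definition simulates :: "'a kframe \<Rightarrow> 'b kframe \<Rightarrow> 'a \<Rightarrow> 'b \<Rightarrow> bool" where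
  "simulates X Y x y \<longleftrightarrow> (\<exists>E. simulation X Y E \<and> E x y)"

definition dynamic_rel :: "'a kframe \<Rightarrow> 'b kframe \<Rightarrow> ('a \<Rightarrow> 'b \<Rightarrow> bool) \<Rightarrow> bool" where
  "dynamic_rel X Y E \<longleftrightarrow>
     (\<forall>x y y'. E x y \<and> suc Y y y' \<longrightarrow> (\<exists>x'. suc X x x' \<and> E x' y'))"

definition surjective_rel :: "'a kframe \<Rightarrow> 'b kframe \<Rightarrow> ('a \<Rightarrow> 'b \<Rightarrow> bool) \<Rightarrow> bool" where
  "surjective_rel X Y E \<longleftrightarrow> (\<forall>y\<in>carrier Y. \<exists>x\<in>carrier X. E x y)"

definition list_of :: "fm set \<Rightarrow> fm list" where
  "list_of S = (SOME xs. set xs = S \<and> distinct xs)"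

definition BigAnd :: "fm set \<Rightarrow> fm" where
  "BigAnd S = foldr And (list_of S) Top"

definition BigOr :: "fm set \<Rightarrow> fm" where
  "BigOr S = foldr Or (list_of S) Bot"

text \<open>Backwards induction on the strict order, implemented with fuel; with fuel
card W the recursion never runs out on a finite partial order.\<close>
primrec simf :: "nat \<Rightarrow> 'a kframe \<Rightarrow> 'a \<Rightarrow> fm" where
  "simf 0 M w = Bot"
| "simf (Suc n) M w =
     Imp (BigAnd (snd (lab M w)))
         (Or (BigOr (fst (lab M w)))
             (BigOr (simf n M ` {v \<in> carrier M. le M w v \<and> v \<noteq> w})))"

definition Sim :: "'a kframe \<Rightarrow> 'a \<Rightarrow> fm" where
  "Sim M w = simf (card (carrier M)) M w"

end

theory Submission
  imports Defs
begin

text \<open>Prime theories of the logic form a deterministic weak quasimodel, the canonical model,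
whose successor map sends a theory G to {a. Nxt a \<in> G}. A point w of a finite quasimodel
simulates some point of the canonical model exactly when Sim(w) is unprovable: a simulation
forces every theory it reaches to refute Sim(w), and conversely a prime theory refuting Sim(w)
can be extended step by step along the order of I into a simulation. Possible moments are
therefore the points that simulate into the canonical model; they are upward closed because
simulations are forward confluent, and serial because the simulation is dynamic.\<close>

inductive ded :: "fm set \<Rightarrow> fm \<Rightarrow> bool" for G where
  hyp: "a \<in> G \<Longrightarrow> ded G a"
| ax: "prv a \<Longrightarrow> ded G a"
| mp: "ded G (Imp a b) \<Longrightarrow> ded G a \<Longrightarrow> ded G b"

lemma prv_imp_refl: "prv (Imp a a)"
  using prv.mp[OF prv.mp[OF prv.ipc2[of a "Imp a a" a] prv.ipc1[of a "Imp a a"]] prv.ipc1[of a a]] .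

lemma deduction_theorem: "ded (insert a G) b \<Longrightarrow> ded G (Imp a b)"
proof (induction rule: ded.induct)
  case (hyp b)
  then show ?case
    by (metis ded.mp ded.hyp ded.ax insert_iff prv.ipc1 prv_imp_refl)
next
  case (ax b)
  then show ?case by (meson ded.mp ded.ax prv.ipc1)
next
  case (mp b c)
  then show ?case by (meson ded.mp ded.ax prv.ipc2)
qed

lemma ded_mono: "ded G a \<Longrightarrow> G \<subseteq> H \<Longrightarrow> ded H a"
  by (induction rule: ded.induct) (auto intro: ded.intros)

lemma ded_finite_subset: "ded G a \<Longrightarrow> \<exists>F. finite F \<and> F \<subseteq> G \<and> ded F a"
proof (induction rule: ded.induct)
  case (hyp a)
  then show ?case by (intro exI[of _ "{a}"]) (auto intro: ded.hyp)
next
  case (ax a)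
  then show ?case by (intro exI[of _ "{}"]) (auto intro: ded.ax)
next
  case (mp a b)
  then obtain F1 F2 where "finite F1" "F1 \<subseteq> G" "ded F1 (Imp a b)" "finite F2" "F2 \<subseteq> G" "ded F2 a"
    by blast
  then show ?case
    by (intro exI[of _ "F1 \<union> F2"]) (auto intro: ded.mp ded_mono)
qed

lemma ded_empty_imp_prv: "ded {} a \<Longrightarrow> prv a"
  by (induction rule: ded.induct) (auto intro: prv.mp)

lemma ded_cut: "ded G a \<Longrightarrow> ded (insert a G) b \<Longrightarrow> ded G b"
  using deduction_theorem ded.mp by blast

lemma ded_Nxt_image: "ded H a \<Longrightarrow> ded (Nxt ` H) (Nxt a)"
proof (induction rule: ded.induct)
  case (hyp a)
  then show ?case by (simp add: ded.hyp)
next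
  case (ax a)
  then show ?case by (simp add: ded.ax prv.nec)
next
  case (mp a b)
  have "ded (Nxt ` H) (Imp (Nxt a) (Nxt b))"
    by (rule ded.mp[OF ded.ax[OF prv.nxt_imp] mp.IH(1)])
  then show ?case using ded.mp mp.IH(2) by blast
qed

section \<open>Prime theories\<close>

definition prime_theory :: "fm set \<Rightarrow> bool" where
  "prime_theory G \<longleftrightarrow>
     (\<forall>a. ded G a \<longrightarrow> a \<in> G) \<and> Bot \<notin> G \<and> (\<forall>a b. Or a b \<in> G \<longrightarrow> a \<in> G \<or> b \<in> G)"

text \<open>A maximal extension of G not deriving a is prime: if neither b nor c could be added,
both would derive a, and then so would Or b c.\<close>

lemma lindenbaum:
  assumes "\<not> ded G a"
  shows "\<exists>D. G \<subseteq> D \<and> prime_theory D \<and> a \<notin> D"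
proof -
  let ?A = "{D. G \<subseteq> D \<and> \<not> ded D a}"
  have "\<forall>C\<in>chains ?A. \<exists>U\<in>?A. \<forall>X\<in>C. X \<subseteq> U"
  proof
    fix C assume C: "C \<in> chains ?A"
    then have CA: "C \<subseteq> ?A" by (simp add: chains_def)
    show "\<exists>U\<in>?A. \<forall>X\<in>C. X \<subseteq> U"
    proof (cases "C = {}")
      case True
      then show ?thesis using assms by (intro bexI[of _ G]) auto
    next
      case False
      have "\<not> ded (\<Union>C) a"
      proof
        assume "ded (\<Union>C) a"
        then obtain F where F: "finite F" "F \<subseteq> \<Union>C" "ded F a"
          using ded_finite_subset by blast
        have "subset.chain ?A C" using C unfolding chains_alt_def by (rule CollectD)
        then obtain B where B: "B \<in> C" "F \<subseteq> B"
          by (rule finite_subset_Union_chain[OF F(1,2) False])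
        then have "\<not> ded B a" using CA by auto
        then show False using ded_mono[OF F(3) B(2)] by simp
      qed
      moreover obtain B where "B \<in> C" using False by blast
      then have "G \<subseteq> \<Union>C" using CA by auto
      ultimately show ?thesis by (intro bexI[of _ "\<Union>C"]) auto
    qed
  qed
  then obtain M where M: "G \<subseteq> M" "\<not> ded M a" and max: "\<forall>X\<in>?A. M \<subseteq> X \<longrightarrow> X = M"
    using Zorn_Lemma2[of ?A] by blast
  have insert_mem: "b \<in> M" if "\<not> ded (insert b M) a" for b
  proof -
    have "insert b M \<in> ?A" using that M by auto
    then show ?thesis using max by blast
  qed
  have closed: "b \<in> M" if "ded M b" for b
    using insert_mem ded_cut[OF that] M(2) by blast
  have "Bot \<notin> M"
  proof
    assume "Bot \<in> M"
    then have "ded M a" by (rule ded.mp[OF ded.ax[OF prv.ipc9] ded.hyp])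
    then show False using M(2) by simp
  qed
  moreover have "b \<in> M \<or> c \<in> M" if bc: "Or b c \<in> M" for b c
  proof (rule ccontr)
    assume "\<not> (b \<in> M \<or> c \<in> M)"
    then have "ded M (Imp b a)" "ded M (Imp c a)"
      using insert_mem deduction_theorem by blast+
    then have "ded M (Imp (Or b c) a)"
      by (rule ded.mp[OF ded.mp[OF ded.ax[OF prv.ipc8[of b a c]]]])
    then show False using ded.mp[OF _ ded.hyp[OF bc]] M(2) by blast
  qed
  ultimately have "prime_theory M"
    unfolding prime_theory_def using closed by blast
  moreover have "a \<notin> M" using M(2) ded.hyp by blast
  ultimately show ?thesis using M(1) by blast
qed

lemma prime_theory_prv: "prime_theory G \<Longrightarrow> prv a \<Longrightarrow> a \<in> G"
  unfolding prime_theory_def using ded.ax by blast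

lemma prime_theory_ded: "prime_theory G \<Longrightarrow> ded G a \<Longrightarrow> a \<in> G"
  unfolding prime_theory_def by blast

lemma prime_theory_mp: "prime_theory G \<Longrightarrow> Imp a b \<in> G \<Longrightarrow> a \<in> G \<Longrightarrow> b \<in> G"
  using prime_theory_ded ded.mp ded.hyp by metis

lemma prime_theory_prv_imp: "prime_theory G \<Longrightarrow> prv (Imp a b) \<Longrightarrow> a \<in> G \<Longrightarrow> b \<in> G"
  using prime_theory_mp prime_theory_prv by blast

lemma prime_theory_Bot: "prime_theory G \<Longrightarrow> Bot \<notin> G"
  unfolding prime_theory_def by blast

lemma prime_theory_Top: "prime_theory G \<Longrightarrow> Top \<in> G"
  unfolding Top_def using prime_theory_prv prv_imp_refl by blast

lemma prime_theory_And: "prime_theory G \<Longrightarrow> And a b \<in> G \<longleftrightarrow> a \<in> G \<and> b \<in> G"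
  using prime_theory_mp[OF _ prime_theory_prv_imp[OF _ prv.ipc5]]
    prime_theory_prv_imp[OF _ prv.ipc3] prime_theory_prv_imp[OF _ prv.ipc4] by blast

lemma prime_theory_Or: "prime_theory G \<Longrightarrow> Or a b \<in> G \<longleftrightarrow> a \<in> G \<or> b \<in> G"
  using prime_theory_prv_imp[OF _ prv.ipc6] prime_theory_prv_imp[OF _ prv.ipc7]
  unfolding prime_theory_def by blast

lemma prime_theory_Imp_notin:
  assumes G: "prime_theory G" and "Imp a b \<notin> G"
  shows "\<exists>D. G \<subseteq> D \<and> prime_theory D \<and> a \<in> D \<and> b \<notin> D"
proof -
  have "\<not> ded (insert a G) b"
  proof
    assume "ded (insert a G) b"
    then have "Imp a b \<in> G" by (rule prime_theory_ded[OF G deduction_theorem])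
    then show False using assms(2) by contradiction
  qed
  then obtain D where "insert a G \<subseteq> D" "prime_theory D" "b \<notin> D"
    using lindenbaum by blast
  then show ?thesis by blast
qed

lemma prv_iff_mem_prime_theories: "prv a \<longleftrightarrow> (\<forall>G. prime_theory G \<longrightarrow> a \<in> G)"
proof
  show "prv a \<Longrightarrow> \<forall>G. prime_theory G \<longrightarrow> a \<in> G" using prime_theory_prv by blast
  assume "\<forall>G. prime_theory G \<longrightarrow> a \<in> G"
  then have "ded {} a" using lindenbaum[of "{}" a] by blast
  then show "prv a" by (rule ded_empty_imp_prv)
qed

lemma prv_Imp_if_mem_prime_theories:
  assumes "\<And>G. prime_theory G \<Longrightarrow> a \<in> G \<Longrightarrow> b \<in> G"
  shows "prv (Imp a b)"
  unfolding prv_iff_mem_prime_theories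
proof (intro allI impI)
  fix G assume "prime_theory G"
  then show "Imp a b \<in> G"
    using prime_theory_Imp_notin assms by blast
qed

definition unnext :: "fm set \<Rightarrow> fm set" where
  "unnext G = {a. Nxt a \<in> G}"

lemma prime_theory_unnext:
  assumes G: "prime_theory G"
  shows "prime_theory (unnext G)"
  unfolding prime_theory_def
proof (intro conjI allI impI)
  fix a assume "ded (unnext G) a"
  then have "ded (Nxt ` unnext G) (Nxt a)" by (rule ded_Nxt_image)
  then have "ded G (Nxt a)" by (rule ded_mono) (auto simp: unnext_def)
  then show "a \<in> unnext G" using prime_theory_ded[OF G] by (simp add: unnext_def)
next
  show "Bot \<notin> unnext G"
    using prime_theory_prv_imp[OF G prv.nxt_bot] prime_theory_Bot[OF G] by (auto simp: unnext_def)
next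
  fix a b assume "Or a b \<in> unnext G"
  then have "Or (Nxt a) (Nxt b) \<in> G"
    using prime_theory_prv_imp[OF G prv.nxt_or] by (auto simp: unnext_def)
  then show "a \<in> unnext G \<or> b \<in> unnext G"
    using prime_theory_Or[OF G] by (auto simp: unnext_def)
qed

lemma prv_Dia_intro: "prv (Imp a (Dia a))"
  by (rule prv_Imp_if_mem_prime_theories) (meson prime_theory_Or prime_theory_prv_imp prv.dia_fix)

lemma prv_Nxt_Dia: "prv (Imp (Nxt (Dia a)) (Dia a))"
  by (rule prv_Imp_if_mem_prime_theories) (meson prime_theory_Or prime_theory_prv_imp prv.dia_fix)

text \<open>The converse of the fixpoint axiom, by the induction rule applied to a \<or> \<circ>\<diamond>a.\<close>

lemma prv_Dia_unfold: "prv (Imp (Dia a) (Or a (Nxt (Dia a))))"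
proof -
  let ?p = "Or a (Nxt (Dia a))"
  have "prv (Imp (Nxt ?p) ?p)"
  proof (rule prv_Imp_if_mem_prime_theories)
    fix G assume G: "prime_theory G" and "Nxt ?p \<in> G"
    then have "a \<in> unnext G \<or> Nxt (Dia a) \<in> unnext G"
      using prime_theory_Or[OF prime_theory_unnext[OF G]] by (simp add: unnext_def)
    then have "Dia a \<in> unnext G"
      using prime_theory_prv_imp[OF prime_theory_unnext[OF G]] prv_Dia_intro prv_Nxt_Dia by blast
    then show "?p \<in> G" using prime_theory_Or[OF G] by (simp add: unnext_def)
  qed
  then have "prv (Imp (Dia ?p) ?p)" by (rule prv.dia_ind)
  moreover have "prv (Imp (Dia a) (Dia ?p))" by (rule prv.dia_mono[OF prv.ipc6])
  ultimately show ?thesis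
    by (intro prv_Imp_if_mem_prime_theories) (meson prime_theory_prv_imp)
qed

lemma set_list_of: "finite S \<Longrightarrow> set (list_of S) = S"
  unfolding list_of_def using finite_distinct_list someI_ex[of "\<lambda>xs. set xs = S \<and> distinct xs"]
  by blast

lemma prime_theory_BigAnd:
  assumes "prime_theory G" and "finite S"
  shows "BigAnd S \<in> G \<longleftrightarrow> S \<subseteq> G"
proof -
  have "foldr And xs Top \<in> G \<longleftrightarrow> set xs \<subseteq> G" for xs
    by (induction xs) (auto simp: prime_theory_And[OF assms(1)] prime_theory_Top[OF assms(1)])
  then show ?thesis unfolding BigAnd_def using set_list_of[OF assms(2)] by metis
qed

lemma prime_theory_BigOr:
  assumes "prime_theory G" and "finite S"
  shows "BigOr S \<in> G \<longleftrightarrow> (\<exists>x\<in>S. x \<in> G)"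
proof -
  have "foldr Or xs Bot \<in> G \<longleftrightarrow> (\<exists>x\<in>set xs. x \<in> G)" for xs
    by (induction xs) (auto simp: prime_theory_Or[OF assms(1)] prime_theory_Bot[OF assms(1)])
  then show ?thesis unfolding BigOr_def using set_list_of[OF assms(2)] by metis
qed

section \<open>The canonical model\<close>

definition canonical_types :: "tp set" where
  "canonical_types = {(UNIV - G, G) | G. prime_theory G}"

definition canonical_model :: "tp kframe" where
  "canonical_model =
     \<lparr>carrier = canonical_types,
      le = (\<lambda>x y. x \<in> canonical_types \<and> y \<in> canonical_types \<and> snd x \<subseteq> snd y),
      lab = id,
      suc = (\<lambda>x y. x \<in> canonical_types \<and> y = (UNIV - unnext (snd x), unnext (snd x)))\<rparr>"

lemma mem_canonical_types_iff: "x \<in> canonical_types \<longleftrightarrow> prime_theory (snd x) \<and> fst x = UNIV - snd x"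
  unfolding canonical_types_def by (cases x) auto

lemma canonical_model_simps:
  "carrier canonical_model = canonical_types"
  "le canonical_model x y \<longleftrightarrow> x \<in> canonical_types \<and> y \<in> canonical_types \<and> snd x \<subseteq> snd y"
  "lab canonical_model x = x"
  "suc canonical_model x y \<longleftrightarrow> x \<in> canonical_types \<and> y = (UNIV - unnext (snd x), unnext (snd x))"
  by (simp_all add: canonical_model_def)

lemma canonical_types_is_type:
  assumes "x \<in> canonical_types"
  shows "is_type UNIV x"
proof -
  have G: "prime_theory (snd x)" and fst_x: "fst x = UNIV - snd x"
    using assms mem_canonical_types_iff by auto
  show ?thesis
    unfolding is_type_def fst_x
  proof (intro conjI allI impI)
    fix a b assume "Imp a b \<in> snd x"
    then show "a \<in> UNIV - snd x \<or> b \<in> snd x" using prime_theory_mp[OF G] by blast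
  next
    fix a assume "Dia a \<in> UNIV - snd x"
    then show "a \<in> UNIV - snd x" using prime_theory_prv_imp[OF G prv_Dia_intro] by blast
  qed (auto simp: prime_theory_Bot[OF G] prime_theory_And[OF G] prime_theory_Or[OF G])
qed

lemma canonical_model_labelled_frame: "labelled_frame UNIV canonical_model"
proof -
  have antisym: "u = v" if "u \<in> canonical_types" "v \<in> canonical_types" "snd u = snd v" for u v
    using that by (simp add: mem_canonical_types_iff prod_eq_iff)
  have Imp_witness: "\<exists>v\<in>canonical_types. snd w \<subseteq> snd v \<and> a \<in> snd v \<and> b \<in> fst v"
    if w: "w \<in> canonical_types" and "Imp a b \<in> fst w" for w a b
  proof -
    have "prime_theory (snd w)" "Imp a b \<notin> snd w"
      using that mem_canonical_types_iff by auto
    then obtain D where "snd w \<subseteq> D" "prime_theory D" "a \<in> D" "b \<notin> D"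
      using prime_theory_Imp_notin by blast
    then show ?thesis by (intro bexI[of _ "(UNIV - D, D)"]) (auto simp: mem_canonical_types_iff)
  qed
  show ?thesis
    unfolding labelled_frame_def canonical_model_simps type_le_def
    using antisym Imp_witness canonical_types_is_type by blast
qed

lemma canonical_model_weak_quasimodel: "weak_quasimodel UNIV canonical_model"
proof -
  have unnext_mem: "(UNIV - unnext (snd w), unnext (snd w)) \<in> canonical_types"
    if "w \<in> canonical_types" for w
    using that prime_theory_unnext by (auto simp: mem_canonical_types_iff)
  have unnext_mono: "unnext G \<subseteq> unnext H" if "G \<subseteq> H" for G H
    using that by (auto simp: unnext_def)
  have "type_S w (UNIV - unnext (snd w), unnext (snd w))" if w: "w \<in> canonical_types" for w
  proof -
    have G: "prime_theory (snd w)" and fst_w: "fst w = UNIV - snd w"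
      using w mem_canonical_types_iff by auto
    have "Nxt (Dia a) \<in> snd w" if "Dia a \<in> snd w" "a \<notin> snd w" for a
      using that prime_theory_prv_imp[OF G prv_Dia_unfold] prime_theory_Or[OF G] by blast
    moreover have "Nxt (Dia a) \<notin> snd w" if "Dia a \<notin> snd w" for a
      using that prime_theory_prv_imp[OF G prv_Nxt_Dia] by blast
    ultimately show ?thesis
      unfolding type_S_def fst_w by (auto simp: unnext_def)
  qed
  then show ?thesis
    unfolding weak_quasimodel_def canonical_model_simps
    using canonical_model_labelled_frame unnext_mem unnext_mono by auto
qed

lemma canonical_model_deterministic: "deterministic canonical_model"
  unfolding deterministic_def canonical_model_simps by auto

lemma labelled_frame_refl: "labelled_frame \<Sigma> I \<Longrightarrow> w \<in> carrier I \<Longrightarrow> le I w w"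
  unfolding labelled_frame_def by blast

lemma labelled_frame_trans:
  "labelled_frame \<Sigma> I \<Longrightarrow> le I u v \<Longrightarrow> le I v w \<Longrightarrow> le I u w"
  unfolding labelled_frame_def by meson

lemma labelled_frame_antisym: "labelled_frame \<Sigma> I \<Longrightarrow> le I u v \<Longrightarrow> le I v u \<Longrightarrow> u = v"
  unfolding labelled_frame_def by meson

lemma labelled_frame_le_carrier: "labelled_frame \<Sigma> I \<Longrightarrow> le I u v \<Longrightarrow> u \<in> carrier I \<and> v \<in> carrier I"
  unfolding labelled_frame_def by meson

lemma labelled_frame_finite_lab:
  assumes "labelled_frame \<Sigma> I" and "finite \<Sigma>" and "w \<in> carrier I"
  shows "finite (fst (lab I w))" "finite (snd (lab I w))"
proof -
  have "is_type \<Sigma> (lab I w)" using assms unfolding labelled_frame_def by blast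
  then have "fst (lab I w) \<subseteq> \<Sigma>" "snd (lab I w) \<subseteq> \<Sigma>" unfolding is_type_def by blast+
  then show "finite (fst (lab I w))" "finite (snd (lab I w))" using assms(2) finite_subset by blast+
qed

definition upset :: "'a kframe \<Rightarrow> 'a \<Rightarrow> 'a set" where
  "upset I w = {v \<in> carrier I. le I w v}"

definition strict_upset :: "'a kframe \<Rightarrow> 'a \<Rightarrow> 'a set" where
  "strict_upset I w = {v \<in> carrier I. le I w v \<and> v \<noteq> w}"

lemma simf_Suc:
  "simf (Suc n) I w =
     Imp (BigAnd (snd (lab I w))) (Or (BigOr (fst (lab I w))) (BigOr (simf n I ` strict_upset I w)))"
  by (simp add: strict_upset_def)

lemma upset_strict_upset_subset:
  assumes "labelled_frame \<Sigma> I" and "v \<in> strict_upset I w"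
  shows "upset I v \<subseteq> upset I w - {w}"
proof
  fix u assume u: "u \<in> upset I v"
  have wv: "le I w v" "v \<noteq> w" using assms(2) by (auto simp: strict_upset_def)
  then have "le I w u" using u labelled_frame_trans[OF assms(1)] by (auto simp: upset_def)
  moreover have "u \<noteq> w" using u wv labelled_frame_antisym[OF assms(1)] by (auto simp: upset_def)
  ultimately show "u \<in> upset I w - {w}" using u by (simp add: upset_def)
qed

lemma card_upset_strict_upset_less:
  assumes "labelled_frame \<Sigma> I" and "finite (carrier I)" and "w \<in> carrier I"
    and "v \<in> strict_upset I w"
  shows "card (upset I v) < card (upset I w)"
proof (rule psubset_card_mono)
  show "finite (upset I w)" using assms(2) by (simp add: upset_def)
  have "w \<in> upset I w" using labelled_frame_refl[OF assms(1,3)] assms(3) by (simp add: upset_def)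
  then show "upset I v \<subset> upset I w" using upset_strict_upset_subset[OF assms(1,4)] by blast
qed

lemma simf_eq_if_card_upset_le:
  assumes lf: "labelled_frame \<Sigma> I" and fin: "finite (carrier I)"
  shows "w \<in> carrier I \<Longrightarrow> card (upset I w) \<le> n \<Longrightarrow> card (upset I w) \<le> m \<Longrightarrow>
    simf n I w = simf m I w"
proof (induction n arbitrary: w m)
  case 0
  have "w \<in> upset I w" using labelled_frame_refl[OF lf 0(1)] 0(1) by (simp add: upset_def)
  then have "card (upset I w) > 0" using fin by (auto simp: upset_def card_gt_0_iff)
  then show ?case using 0 by simp
next
  case (Suc n)
  have "w \<in> upset I w" using labelled_frame_refl[OF lf Suc.prems(1)] Suc.prems(1) by (simp add: upset_def)
  then have "card (upset I w) > 0" using fin by (auto simp: upset_def card_gt_0_iff)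
  then obtain k where m: "m = Suc k" using Suc.prems(3) by (cases m) auto
  have "simf n I v = simf k I v" if v: "v \<in> strict_upset I w" for v
    using Suc.IH[of v k] Suc.prems m card_upset_strict_upset_less[OF lf fin Suc.prems(1) v] v
    by (auto simp: strict_upset_def)
  then show ?case unfolding m simf_Suc by (simp cong: image_cong)
qed

lemma Sim_eq:
  assumes lf: "labelled_frame \<Sigma> I" and fin: "finite (carrier I)" and w: "w \<in> carrier I"
  shows "Sim I w =
    Imp (BigAnd (snd (lab I w))) (Or (BigOr (fst (lab I w))) (BigOr (Sim I ` strict_upset I w)))"
proof -
  obtain k where k: "card (carrier I) = Suc k" using w fin by (cases "card (carrier I)") auto
  have "simf k I v = Sim I v" if v: "v \<in> strict_upset I w" for v
  proof -
    have "card (upset I v) \<le> card (carrier I - {w})"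
      using upset_strict_upset_subset[OF lf v] fin by (intro card_mono) (auto simp: upset_def)
    also have "\<dots> = k" using k w fin by simp
    finally show ?thesis
      unfolding Sim_def k using v
      by (intro simf_eq_if_card_upset_le[OF lf fin]) (auto simp: strict_upset_def)
  qed
  then show ?thesis unfolding Sim_def k simf_Suc by (simp cong: image_cong)
qed

section \<open>Simulations into the canonical model\<close>

lemma simulation_canonical_model_simf_notin:
  assumes lf: "labelled_frame \<Sigma> I" and fS: "finite \<Sigma>" and fin: "finite (carrier I)"
    and E: "simulation I canonical_model E"
  shows "E x y \<Longrightarrow> simf n I x \<notin> snd y"
proof (induction n arbitrary: x y)
  case 0
  then have "y \<in> canonical_types" using E unfolding simulation_def canonical_model_simps by blast
  then show ?case using prime_theory_Bot mem_canonical_types_iff by auto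
next
  case (Suc n)
  have x: "x \<in> carrier I" and y: "y \<in> canonical_types" and sub: "type_sub (lab I x) y"
    using E Suc.prems unfolding simulation_def canonical_model_simps by blast+
  then have G: "prime_theory (snd y)" and fst_y: "fst y = UNIV - snd y"
    using mem_canonical_types_iff by auto
  have lab_plus: "BigAnd (snd (lab I x)) \<in> snd y"
    using sub prime_theory_BigAnd[OF G labelled_frame_finite_lab(2)[OF lf fS x]]
    by (simp add: type_sub_def)
  have lab_minus: "BigOr (fst (lab I x)) \<notin> snd y"
    using sub fst_y prime_theory_BigOr[OF G labelled_frame_finite_lab(1)[OF lf fS x]]
    by (auto simp: type_sub_def)
  have later: "BigOr (simf n I ` strict_upset I x) \<notin> snd y"
  proof
    assume "BigOr (simf n I ` strict_upset I x) \<in> snd y"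
    then obtain v where v: "v \<in> strict_upset I x" "simf n I v \<in> snd y"
      using prime_theory_BigOr[OF G] fin by (auto simp: strict_upset_def)
    then obtain y' where "le canonical_model y y'" "E v y'"
      using E Suc.prems unfolding simulation_def strict_upset_def by blast
    then show False
      using v(2) Suc.IH[of v y'] by (auto simp: canonical_model_simps)
  qed
  show ?case
    unfolding simf_Suc using lab_plus lab_minus later prime_theory_mp[OF G] prime_theory_Or[OF G]
    by blast
qed

lemma simulates_canonical_model_not_prv_Sim:
  assumes "labelled_frame \<Sigma> I" and "finite \<Sigma>" and "finite (carrier I)"
    and "simulates I canonical_model x y"
  shows "\<not> prv (Sim I x)"
proof -
  obtain E where E: "simulation I canonical_model E" "E x y"
    using assms(4) unfolding simulates_def by blast
  then have "prime_theory (snd y)"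
    unfolding simulation_def canonical_model_simps mem_canonical_types_iff by blast
  moreover have "Sim I x \<notin> snd y"
    unfolding Sim_def using simulation_canonical_model_simf_notin[OF assms(1-3) E] .
  ultimately show ?thesis using prime_theory_prv by blast
qed

text \<open>Refuting Sim at a strict successor x' of x is exactly what is needed to extend a point
related to x to one related to x', which makes this relation forward confluent.\<close>

definition refuting_sim :: "'a kframe \<Rightarrow> 'a \<Rightarrow> tp \<Rightarrow> bool" where
  "refuting_sim I x y \<longleftrightarrow>
     x \<in> carrier I \<and> y \<in> canonical_types \<and> type_sub (lab I x) y \<and>
     (\<forall>v\<in>strict_upset I x. Sim I v \<notin> snd y)"

lemma refuting_sim_extend:
  assumes lf: "labelled_frame \<Sigma> I" and fS: "finite \<Sigma>" and fin: "finite (carrier I)"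
    and x: "x \<in> carrier I" and G: "prime_theory G" and "Sim I x \<notin> G"
  shows "\<exists>D. G \<subseteq> D \<and> refuting_sim I x (UNIV - D, D)"
proof -
  have "Imp (BigAnd (snd (lab I x))) (Or (BigOr (fst (lab I x))) (BigOr (Sim I ` strict_upset I x)))
      \<notin> G"
    using assms(6) Sim_eq[OF lf fin x] by simp
  then obtain D where D: "G \<subseteq> D" "prime_theory D" "BigAnd (snd (lab I x)) \<in> D"
      "Or (BigOr (fst (lab I x))) (BigOr (Sim I ` strict_upset I x)) \<notin> D"
    by (blast dest: prime_theory_Imp_notin[OF G])
  have "snd (lab I x) \<subseteq> D"
    using D(3) prime_theory_BigAnd[OF D(2) labelled_frame_finite_lab(2)[OF lf fS x]] by blast
  moreover have "fst (lab I x) \<subseteq> UNIV - D"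
    using D(4) prime_theory_Or[OF D(2)]
      prime_theory_BigOr[OF D(2) labelled_frame_finite_lab(1)[OF lf fS x]] by blast
  moreover have "\<forall>v\<in>strict_upset I x. Sim I v \<notin> D"
    using D(4) prime_theory_Or[OF D(2)] prime_theory_BigOr[OF D(2)] fin
    by (auto simp: strict_upset_def)
  ultimately show ?thesis
    using D(1,2) x by (auto simp: refuting_sim_def type_sub_def mem_canonical_types_iff)
qed

lemma simulation_refuting_sim:
  assumes lf: "labelled_frame \<Sigma> I" and fS: "finite \<Sigma>" and fin: "finite (carrier I)"
  shows "simulation I canonical_model (refuting_sim I)"
  unfolding simulation_def
proof (intro conjI allI impI)
  fix x y x' assume xy: "refuting_sim I x y \<and> le I x x'"
  then have y: "y \<in> canonical_types" and x': "x' \<in> carrier I"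
    using labelled_frame_le_carrier[OF lf] by (auto simp: refuting_sim_def)
  show "\<exists>y'. le canonical_model y y' \<and> refuting_sim I x' y'"
  proof (cases "x' = x")
    case True
    then show ?thesis using xy y by (intro exI[of _ y]) (auto simp: canonical_model_simps)
  next
    case False
    then have "Sim I x' \<notin> snd y"
      using xy x' by (auto simp: refuting_sim_def strict_upset_def)
    then obtain D where "snd y \<subseteq> D" "refuting_sim I x' (UNIV - D, D)"
      using refuting_sim_extend[OF lf fS fin x'] y mem_canonical_types_iff by blast
    then show ?thesis
      using y by (intro exI[of _ "(UNIV - D, D)"]) (auto simp: canonical_model_simps refuting_sim_def)
  qed
qed (auto simp: refuting_sim_def canonical_model_simps)

lemma not_prv_Sim_iff_simulates_canonical_model:
  assumes lf: "labelled_frame \<Sigma> I" and fS: "finite \<Sigma>" and fin: "finite (carrier I)"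
    and w: "w \<in> carrier I"
  shows "\<not> prv (Sim I w) \<longleftrightarrow> (\<exists>y. simulates I canonical_model w y)"
proof
  assume "\<not> prv (Sim I w)"
  then obtain G where "prime_theory G" "Sim I w \<notin> G"
    using prv_iff_mem_prime_theories by blast
  then obtain D where "refuting_sim I w (UNIV - D, D)"
    using refuting_sim_extend[OF lf fS fin w] by blast
  then show "\<exists>y. simulates I canonical_model w y"
    using simulation_refuting_sim[OF lf fS fin] unfolding simulates_def by blast
qed (use simulates_canonical_model_not_prv_Sim[OF lf fS fin] in blast)

theorem lemma6p3:
  fixes \<Sigma> :: "fm set" and I :: "'a kframe"
  assumes "finite \<Sigma>" and "subfm_closed \<Sigma>"
    and "weak_quasimodel \<Sigma> I" and "finite (carrier I)"
    and "\<And>A :: tp kframe. weak_quasimodel UNIV A \<Longrightarrow> deterministic A \<Longrightarrow>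
           simulation I A (simulates I A) \<and> dynamic_rel I A (simulates I A)
           \<and> surjective_rel I A (simulates I A)"
  defines "P \<equiv> {w \<in> carrier I. \<not> prv (Sim I w)}"
  shows "(\<forall>w\<in>P. \<forall>v\<in>carrier I. le I w v \<longrightarrow> v \<in> P)
       \<and> (\<forall>w\<in>P. \<exists>v\<in>P. suc I w v)"
proof -
  let ?C = canonical_model
  have lf: "labelled_frame \<Sigma> I" using assms(3) unfolding weak_quasimodel_def by blast
  have P_iff: "w \<in> P \<longleftrightarrow> w \<in> carrier I \<and> (\<exists>y. simulates I ?C w y)" for w
    unfolding P_def using not_prv_Sim_iff_simulates_canonical_model[OF lf assms(1,4), of w] by blast
  have "v \<in> P" if "w \<in> P" and wv: "le I w v" for w v
  proof -
    obtain E y where E: "simulation I ?C E" "E w y"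
      using \<open>w \<in> P\<close> P_iff[of w] unfolding simulates_def by blast
    then obtain y' where "E v y'" using wv unfolding simulation_def by blast
    then have "simulates I ?C v y'" using E(1) unfolding simulates_def by blast
    then show "v \<in> P" using P_iff[of v] labelled_frame_le_carrier[OF lf wv] by blast
  qed
  moreover have "\<exists>v\<in>P. suc I w v" if wP: "w \<in> P" for w
  proof -
    obtain y where wy: "simulates I ?C w y" using wP P_iff[of w] by blast
    then have "y \<in> carrier ?C" unfolding simulates_def simulation_def by blast
    then obtain y' where "suc ?C y y'"
      using canonical_model_deterministic unfolding deterministic_def by blast
    moreover have "dynamic_rel I ?C (simulates I ?C)"
      using assms(5)[OF canonical_model_weak_quasimodel canonical_model_deterministic] by blast
    ultimately obtain v where v: "suc I w v" "simulates I ?C v y'"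
      using wy unfolding dynamic_rel_def by blast
    moreover have "v \<in> carrier I" using assms(3) v(1) unfolding weak_quasimodel_def by blast
    ultimately show ?thesis using P_iff[of v] by blast
  qed
  ultimately show ?thesis by blast
qed

end
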